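(* Let $\mathbf{M}=(\mathcal{S},s_I,\mathcal{A},P,\mathcal{Z},O,R)$ be a POMDP and let $\mathbf{M}_{fo}$ be its corresponding fully observable MDP. Then for every finite $N\in\mathbb{N}$, \[ \sup_{\pi \in \Pi(\mathbf{M})}H^{\pi}(S_1, S_2,\ldots, S_N)\;\leq\; \sup_{\pi \in \Pi(\mathbf{M}_{fo})}H^{\pi}(S_1, S_2,\ldots, S_N). \]
   Context: A POMDP is a tuple $\mathbf{M}=(\mathcal{S},s_I,\mathcal{A},P,\mathcal{Z},O,R)$ where $\mathcal{S}$ is a finite set of states, $s_I\in\mathcal{S}$ is the unique initial state, $\mathcal{A}$ is a finite set of actions (all available in every state), $P:\mathcal{S}\times\mathcal{A}\to\Delta(\mathcal{S})$ is a transition function (write $P_{s,a,s'}=P(s'|s,a)$), $\mathcal{Z}$ is a finite set of observations, $O:\mathcal{S}\to\Delta(\mathcal{Z})$ is an observation function (write $O_{s,z}=O(z|s)$), and $R:\mathcal{S}\times\mathcal{A}\to\mathbb{R}$ is a reward function. An observation history of length $t$ is a sequence $(z_1,a_1,z_2,a_2,\ldots,z_t)$ of observations and actions. A controller $\pi$ is a map from observation histories of all lengths to probability distributions over $\mathcal{A}$; $\Pi(\mathbf{M})$ denotes the set of all controllers. A controller $\pi$ induces a stochastic process as follows: $S_1=s_I$; at each time $t$ an observation $Z_t$ is drawn from $O(\cdot|S_t)$, an action $A_t$ is drawn from $\pi(\cdot\mid Z_1,A_1,\ldots,Z_t)$, and $S_{t+1}$ is drawn from $P(\cdot|S_t,A_t)$.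 $H^{\pi}(S_1,\ldots,S_N)$ denotes the joint Shannon entropy of $(S_1,\ldots,S_N)$ under this process (convention $0\log 0=0$). The corresponding fully observable MDP $\mathbf{M}_{fo}$ is obtained from $\mathbf{M}$ by setting $\mathcal{Z}=\mathcal{S}$ and $O_{s,s}=1$ for all $s\in\mathcal{S}$ (so its controllers may depend on the full state–action history). *)

theory Defs
  imports "HOL-Probability.Probability_Mass_Function"
begin

text \<open>A POMDP with finite state type 's, action type 'a, observation type 'z, given by
  initial state sI, transition kernel P s a (a pmf over successor states), observation
  function Obs s (a pmf over observations) and reward R (irrelevant for the entropy).
  An observation history (z_1,a_1,...,z_t) is represented by the list of past pairs
  [(z_1,a_1),...,(z_{t-1},a_{t-1})] together with the current observation z_t.\<close>

type_synonym ('z, 'a) controller = "('z \<times> 'a) list \<Rightarrow> 'z \<Rightarrow> 'a pmf"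

text \<open>traj P Obs \<pi> n h s: distribution of the next n states (S_t,...,S_{t+n-1}),
  starting with S_t = s and past history h.\<close>
fun traj :: "('s \<Rightarrow> 'a \<Rightarrow> 's pmf) \<Rightarrow> ('s \<Rightarrow> 'z pmf) \<Rightarrow> ('z, 'a) controller
             \<Rightarrow> nat \<Rightarrow> ('z \<times> 'a) list \<Rightarrow> 's \<Rightarrow> 's list pmf" where
  "traj P Obs \<pi> 0 h s = return_pmf []"
| "traj P Obs \<pi> (Suc n) h s =
     bind_pmf (Obs s) (\<lambda>z. bind_pmf (\<pi> h z) (\<lambda>a. bind_pmf (P s a) (\<lambda>s'.
       map_pmf (\<lambda>rest. s # rest) (traj P Obs \<pi> n (h @ [(z, a)]) s'))))"

definition state_dist :: "'s \<Rightarrow> ('s \<Rightarrow> 'a \<Rightarrow> 's pmf) \<Rightarrow> ('s \<Rightarrow> 'z pmf)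
             \<Rightarrow> ('z, 'a) controller \<Rightarrow> nat \<Rightarrow> 's list pmf" where
  "state_dist sI P Obs \<pi> N = traj P Obs \<pi> N [] sI"

text \<open>Shannon entropy (base 2) of a finitely supported pmf; 0 log 0 = 0 is automatic
  since only points of the support are summed.\<close>
definition shannon_entropy :: "'b pmf \<Rightarrow> real" where
  "shannon_entropy p = - (\<Sum>x\<in>set_pmf p. pmf p x * log 2 (pmf p x))"

definition state_entropy :: "'s \<Rightarrow> ('s \<Rightarrow> 'a \<Rightarrow> 's pmf) \<Rightarrow> ('s \<Rightarrow> 'z pmf)
             \<Rightarrow> ('z, 'a) controller \<Rightarrow> nat \<Rightarrow> real" where
  "state_entropy sI P Obs \<pi> N = shannon_entropy (state_dist sI P Obs \<pi> N)"

text \<open>Fully observable version: observation set = state set, Obs(s|s) = 1.\<close>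
definition fo_obs :: "'s \<Rightarrow> 's pmf" where
  "fo_obs s = return_pmf s"

end

theory Submission
  imports Defs
begin

text \<open>A fully observable controller can simulate any POMDP controller \<pi>: given the state-action
  history so far, it keeps the posterior distribution of the POMDP observation history, draws a
  history from it, draws an observation of the current state, and plays the action \<pi> would play.
  By the disintegration of a joint distribution into the law of the action and the conditional
  law of the history given the action, the simulation induces exactly the same distribution of
  state sequences, hence the same entropy. Entropies of length-N state sequences are bounded,
  so the suprema exist and the inequality follows.\<close>

lemma bind_cond_pmf_snd: "bind_pmf (map_pmf snd J) (\<lambda>a. cond_pmf J {x. snd x = a}) = J"
proof (rule bind_cond_pmf_cancel)
  show "\<And>a. a \<in> set_pmf (map_pmf snd J) \<Longrightarrow> set_pmf J \<inter> {x. snd x = a} \<noteq> {}"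
    by auto
  show "\<And>x. x \<in> set_pmf J \<Longrightarrow> set_pmf (map_pmf snd J) \<inter> {a. snd x = a} \<noteq> {}"
    by auto
  show "\<And>a x. a \<in> set_pmf (map_pmf snd J) \<Longrightarrow> x \<in> set_pmf J \<Longrightarrow> snd x = a \<Longrightarrow>
      measure_pmf.prob J {x. snd x = a} = measure_pmf.prob (map_pmf snd J) {b. snd x = b}"
    by (auto simp: measure_map_pmf vimage_def intro!: arg_cong[where f="measure_pmf.prob J"])
qed

lemma bind_pmf_disintegrate_snd:
  "bind_pmf (map_pmf snd J) (\<lambda>a. bind_pmf (map_pmf fst (cond_pmf J {x. snd x = a})) (\<lambda>h. K h a))
     = bind_pmf J (\<lambda>x. K (fst x) (snd x))"
proof -
  have "bind_pmf (map_pmf fst (cond_pmf J {x. snd x = a})) (\<lambda>h. K h a)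
      = bind_pmf (cond_pmf J {x. snd x = a}) (\<lambda>x. K (fst x) (snd x))"
    if "a \<in> set_pmf (map_pmf snd J)" for a
  proof -
    from that have "set_pmf J \<inter> {x. snd x = a} \<noteq> {}"
      by auto
    then show ?thesis
      unfolding bind_map_pmf by (intro bind_pmf_cong) (auto simp: set_cond_pmf)
  qed
  then have "bind_pmf (map_pmf snd J) (\<lambda>a. bind_pmf (map_pmf fst (cond_pmf J {x. snd x = a})) (\<lambda>h. K h a))
      = bind_pmf (map_pmf snd J) (\<lambda>a. bind_pmf (cond_pmf J {x. snd x = a}) (\<lambda>x. K (fst x) (snd x)))"
    by (intro bind_pmf_cong) simp_all
  also have "\<dots> = bind_pmf J (\<lambda>x. K (fst x) (snd x))"
    by (simp add: bind_assoc_pmf[symmetric] bind_cond_pmf_snd)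
  finally show ?thesis .
qed

definition joint_history_action :: "('s \<Rightarrow> 'z pmf) \<Rightarrow> ('z, 'a) controller
    \<Rightarrow> ('z \<times> 'a) list pmf \<Rightarrow> 's \<Rightarrow> (('z \<times> 'a) list \<times> 'a) pmf" where
  "joint_history_action Obs \<pi> \<mu> s = bind_pmf \<mu> (\<lambda>h. bind_pmf (Obs s) (\<lambda>z.
      map_pmf (\<lambda>a. (h @ [(z, a)], a)) (\<pi> h z)))"

text \<open>Conditioning on an action outside the support yields a junk value of cond_pmf; this never
  matters, since the simulation only reaches action sequences of positive probability.\<close>

definition posterior_update :: "('s \<Rightarrow> 'z pmf) \<Rightarrow> ('z, 'a) controller
    \<Rightarrow> ('z \<times> 'a) list pmf \<Rightarrow> 's \<times> 'a \<Rightarrow> ('z \<times> 'a) list pmf" where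
  "posterior_update Obs \<pi> \<mu> sa =
     map_pmf fst (cond_pmf (joint_history_action Obs \<pi> \<mu> (fst sa)) {x. snd x = snd sa})"

definition history_posterior :: "('s \<Rightarrow> 'z pmf) \<Rightarrow> ('z, 'a) controller
    \<Rightarrow> ('s \<times> 'a) list \<Rightarrow> ('z \<times> 'a) list pmf" where
  "history_posterior Obs \<pi> g = foldl (posterior_update Obs \<pi>) (return_pmf []) g"

definition simulating_controller :: "('s \<Rightarrow> 'z pmf) \<Rightarrow> ('z, 'a) controller \<Rightarrow> ('s, 'a) controller" where
  "simulating_controller Obs \<pi> g s =
     map_pmf snd (joint_history_action Obs \<pi> (history_posterior Obs \<pi> g) s)"

lemma traj_simulating_controller:
  "traj P fo_obs (simulating_controller Obs \<pi>) n g s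
     = bind_pmf (history_posterior Obs \<pi> g) (\<lambda>h. traj P Obs \<pi> n h s)"
proof (induction n arbitrary: g s)
  case 0
  then show ?case
    by (simp add: bind_return_pmf')
next
  case (Suc n)
  define J where "J = joint_history_action Obs \<pi> (history_posterior Obs \<pi> g) s"
  define K where "K = (\<lambda>h a. bind_pmf (P s a) (\<lambda>s'. map_pmf ((#) s) (traj P Obs \<pi> n h s')))"
  have posterior_snoc: "history_posterior Obs \<pi> (g @ [(s, a)])
      = map_pmf fst (cond_pmf J {x. snd x = a})" for a
    by (simp add: history_posterior_def posterior_update_def J_def)
  have "traj P fo_obs (simulating_controller Obs \<pi>) (Suc n) g s
      = bind_pmf (map_pmf snd J) (\<lambda>a. bind_pmf (map_pmf fst (cond_pmf J {x. snd x = a})) (\<lambda>h. K h a))"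
    unfolding K_def
    by (simp add: fo_obs_def bind_return_pmf Suc posterior_snoc simulating_controller_def J_def
        map_bind_pmf bind_commute_pmf[of "P s _"])
  also have "\<dots> = bind_pmf J (\<lambda>x. K (fst x) (snd x))"
    by (rule bind_pmf_disintegrate_snd)
  also have "\<dots> = bind_pmf (history_posterior Obs \<pi> g) (\<lambda>h. traj P Obs \<pi> (Suc n) h s)"
    by (simp add: J_def joint_history_action_def K_def bind_assoc_pmf bind_map_pmf map_bind_pmf)
  finally show ?case .
qed

lemma state_dist_simulating_controller:
  "state_dist sI P fo_obs (simulating_controller Obs \<pi>) N = state_dist sI P Obs \<pi> N"
  by (simp add: state_dist_def traj_simulating_controller history_posterior_def bind_return_pmf)

lemma neg_mult_log_le:
  fixes p :: real
  assumes "0 \<le> p" "p \<le> 1"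
  shows "- (p * log 2 p) \<le> 1 / ln 2"
proof (cases "p = 0")
  case False
  with assms have p: "0 < p"
    by simp
  have "ln (1 / p) \<le> 1 / p - 1"
    using p by (intro ln_le_minus_one) simp
  then have "- (p * ln p) \<le> 1 - p"
    using p by (simp add: ln_div field_simps)
  then show ?thesis
    using p by (simp add: log_def field_simps)
qed simp

lemma shannon_entropy_le_card:
  assumes "finite A" "set_pmf p \<subseteq> A"
  shows "shannon_entropy p \<le> card A / ln 2"
proof -
  have "shannon_entropy p = (\<Sum>x\<in>A. - (pmf p x * log 2 (pmf p x)))"
    unfolding shannon_entropy_def sum_negf[symmetric]
    by (rule sum.mono_neutral_left[OF assms]) (auto simp: set_pmf_iff)
  also have "\<dots> \<le> (\<Sum>x\<in>A. 1 / ln 2)"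
    by (intro sum_mono neg_mult_log_le) (auto simp: pmf_le_1)
  finally show ?thesis
    by simp
qed

lemma set_pmf_traj_length: "set_pmf (traj P Obs \<pi> n h s) \<subseteq> {xs. length xs = n}"
  by (induction n arbitrary: h s) fastforce+

lemma bdd_above_state_entropy:
  "bdd_above (range (\<lambda>\<pi>. state_entropy (sI :: 's::finite) P Obs \<pi> N))"
proof (rule bdd_aboveI2)
  have "finite {xs :: 's list. length xs = N}"
    using finite_lists_length_eq[of "UNIV :: 's set" N] by simp
  then show "state_entropy sI P Obs \<pi> N \<le> card {xs :: 's list. length xs = N} / ln 2" for \<pi>
    unfolding state_entropy_def state_dist_def
    by (intro shannon_entropy_le_card set_pmf_traj_length)
qed

theorem theorem1:
  fixes sI :: "'s::finite"
    and P :: "'s \<Rightarrow> 'a::finite \<Rightarrow> 's pmf"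
    and Obs :: "'s \<Rightarrow> 'z::finite pmf"
    and R :: "'s \<Rightarrow> 'a \<Rightarrow> real"
    and N :: nat
  shows "(SUP \<pi> :: ('z, 'a) controller. state_entropy sI P Obs \<pi> N)
           \<le> (SUP \<pi> :: ('s, 'a) controller. state_entropy sI P fo_obs \<pi> N)"
proof (rule cSUP_mono)
  fix \<pi> :: "('z, 'a) controller"
  have "state_entropy sI P Obs \<pi> N = state_entropy sI P fo_obs (simulating_controller Obs \<pi>) N"
    by (simp add: state_entropy_def state_dist_simulating_controller)
  then show "\<exists>\<sigma>\<in>UNIV. state_entropy sI P Obs \<pi> N \<le> state_entropy sI P fo_obs \<sigma> N"
    by auto
qed (simp_all add: bdd_above_state_entropy)

end
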